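(* Let $\epsilon>0$. After $K=\tau\ln(\frac1\epsilon)$ iterations of Dual KOSZ starting from $\mathbf x^0=0$, we have $\mathcal B(\mathbf x^* )-\mathbb E[\mathcal B(\mathbf x^K)]\le\epsilon\cdot\mathcal B(\mathbf x^* )$.
   Context: $G=(V,E)$ is a connected undirected graph with resistances $r(e)>0$; $\mathbf b\in\mathbb R^V$ with $\sum_ib(i)=0$; $\mathbf L=\sum_{ij\in E}\frac1{r(i,j)}(\mathbf e_i-\mathbf e_j)(\mathbf e_i-\mathbf e_j)^\top$, $\mathcal B(\mathbf x)=\mathbf b^\top\mathbf x-\frac12\mathbf x^\top\mathbf L\mathbf x$, $\mathbf x^*$ maximizes $\mathcal B$. $T$ is a rooted spanning tree with edges directed toward the root; $C(i,j)$ is the vertex set of the component of $T-ij$ containing $i$; $R(C)=(\sum_{e\in\delta(C)}1/r(e))^{-1}$, $b(C)=\sum_{v\in C}b(v)$, $f_{\mathbf x}(C)=\sum_{kl\in E,k\in C,l\notin C}\frac{x(k)-x(l)}{r(k,l)}$; $\tau=\sum_{(i,j)\in T}\frac{r(i,j)}{R(C(i,j))}$. Dual KOSZ: $\mathbf x^0=0$; each iteration independently samples a tree edge $(i,j)$ with probability $\frac1\tau\frac{r(i,j)}{R(C(i,j))}$, and with $C=C(i,j)$ sets $\mathbf x^{t+1}=\mathbf x^t+(b(C)-f_{\mathbf x^t}(C))R(C)\mathbbm 1_C$. *)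

theory Defs
  imports "HOL-Probability.Probability"
begin

definition graph_edges_ok :: "'a set set \<Rightarrow> bool" where
  "graph_edges_ok E \<longleftrightarrow> (\<forall>e\<in>E. card e = 2)"

definition graph_connected :: "'a set set \<Rightarrow> bool" where
  "graph_connected E \<longleftrightarrow> (\<forall>u v. (u, v) \<in> {(k, l). {k, l} \<in> E}\<^sup>*)"

text \<open>Laplacian L = sum over edges ij of 1/r(ij) (e_i - e_j)(e_i - e_j)^T; for e = {i,j}
  the (u,v) entry of (e_i - e_j)(e_i - e_j)^T is 1 if u = v in e, -1 if u,v in e, u ~= v, else 0.\<close>
definition lap :: "('a set \<Rightarrow> real) \<Rightarrow> 'a set set \<Rightarrow> 'a \<Rightarrow> 'a \<Rightarrow> real" where
  "lap r E u v = (\<Sum>e\<in>E. (1 / r e) * (if u \<in> e \<and> v \<in> e then (if u = v then 1 else -1) else 0))"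

definition Bfun :: "('a::finite \<Rightarrow> real) \<Rightarrow> ('a set \<Rightarrow> real) \<Rightarrow> 'a set set \<Rightarrow> ('a \<Rightarrow> real) \<Rightarrow> real" where
  "Bfun b r E x = (\<Sum>v\<in>UNIV. b v * x v) - 1/2 * (\<Sum>u\<in>UNIV. \<Sum>v\<in>UNIV. x u * lap r E u v * x v)"

definition cut_edges :: "'a set set \<Rightarrow> 'a set \<Rightarrow> 'a set set" where
  "cut_edges E C = {e\<in>E. \<exists>k\<in>C. \<exists>l. l \<notin> C \<and> e = {k, l}}"

definition Rcut :: "('a set \<Rightarrow> real) \<Rightarrow> 'a set set \<Rightarrow> 'a set \<Rightarrow> real" where
  "Rcut r E C = inverse (\<Sum>e\<in>cut_edges E C. 1 / r e)"

definition bset :: "('a \<Rightarrow> real) \<Rightarrow> 'a set \<Rightarrow> real" where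
  "bset b C = (\<Sum>v\<in>C. b v)"

definition flow :: "('a::finite set \<Rightarrow> real) \<Rightarrow> 'a set set \<Rightarrow> ('a \<Rightarrow> real) \<Rightarrow> 'a set \<Rightarrow> real" where
  "flow r E x C = (\<Sum>k\<in>C. \<Sum>l\<in>- C. if {k, l} \<in> E then (x k - x l) / r {k, l} else 0)"

text \<open>Rooted spanning tree, edges (i,j) directed toward the root rho: every tree edge is a graph
  edge, the root has no outgoing edge, every other vertex has exactly one outgoing edge,
  and every vertex reaches the root.\<close>
definition rooted_spanning_tree :: "'a set set \<Rightarrow> ('a \<times> 'a) set \<Rightarrow> 'a \<Rightarrow> bool" where
  "rooted_spanning_tree E T rho \<longleftrightarrow>
     (\<forall>(i, j)\<in>T. {i, j} \<in> E) \<and>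
     (\<forall>j. (rho, j) \<notin> T) \<and>
     (\<forall>i. i \<noteq> rho \<longrightarrow> (\<exists>!j. (i, j) \<in> T)) \<and>
     (\<forall>v. (v, rho) \<in> T\<^sup>*)"

text \<open>C(i,j): vertex set of the component of T - ij (undirected) containing i.\<close>
definition tree_comp :: "('a \<times> 'a) set \<Rightarrow> 'a \<Rightarrow> 'a \<Rightarrow> 'a set" where
  "tree_comp T i j = {v. (i, v) \<in> ((T - {(i, j)}) \<union> (T - {(i, j)})\<inverse>)\<^sup>*}"

definition tau :: "('a::finite set \<Rightarrow> real) \<Rightarrow> 'a set set \<Rightarrow> ('a \<times> 'a) set \<Rightarrow> real" where
  "tau r E T = (\<Sum>(i, j)\<in>T. r {i, j} / Rcut r E (tree_comp T i j))"

definition edge_pmf :: "('a::finite set \<Rightarrow> real) \<Rightarrow> 'a set set \<Rightarrow> ('a \<times> 'a) set \<Rightarrow> ('a \<times> 'a) pmf" where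
  "edge_pmf r E T = embed_pmf (\<lambda>(i, j). if (i, j) \<in> T
       then (1 / tau r E T) * (r {i, j} / Rcut r E (tree_comp T i j)) else 0)"

definition kosz_update :: "('a::finite \<Rightarrow> real) \<Rightarrow> ('a set \<Rightarrow> real) \<Rightarrow> 'a set set \<Rightarrow> ('a \<times> 'a) set
    \<Rightarrow> ('a \<Rightarrow> real) \<Rightarrow> ('a \<times> 'a) \<Rightarrow> ('a \<Rightarrow> real)" where
  "kosz_update b r E T x ij = (let C = tree_comp T (fst ij) (snd ij) in
     (\<lambda>v. x v + (bset b C - flow r E x C) * Rcut r E C * indicator C v))"

fun kosz_dist :: "('a::finite \<Rightarrow> real) \<Rightarrow> ('a set \<Rightarrow> real) \<Rightarrow> 'a set set \<Rightarrow> ('a \<times> 'a) set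
    \<Rightarrow> nat \<Rightarrow> ('a \<Rightarrow> real) pmf" where
  "kosz_dist b r E T 0 = return_pmf (\<lambda>_. 0)"
| "kosz_dist b r E T (Suc K) =
     bind_pmf (kosz_dist b r E T K) (\<lambda>x. map_pmf (kosz_update b r E T x) (edge_pmf r E T))"

end

theory Submission
  imports Defs
begin

(* Write <x, z> for the Laplacian form x^T L z.  Since xstar maximises the concave quadratic B,
   L xstar = b, so B xstar - B x = <xstar - x, xstar - x> / 2, and the update on C = C(i,j) raises B
   by exactly R(C) <1_C, xstar - x>^2 / 2.  Telescoping along the paths to the root gives
   <y, y> = sum over (i,j) in T of (y i - y j) <1_C(i,j), y>; as the tree edges carry at most the
   energy <y, y>, AM-GM yields <y, y> <= sum over (i,j) in T of r(i,j) <1_C(i,j), y>^2.  With the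
   sampling probabilities r(i,j) / (tau R(C(i,j))) one step therefore closes at least a 1/tau
   fraction of the expected gap, and (1 - 1/tau)^K <= exp(-K/tau) <= epsilon.
   Connectedness of G and sum b = 0 only serve to make a maximiser xstar exist. *)

section \<open>The Laplacian form\<close>

definition lap_form :: "('a set \<Rightarrow> real) \<Rightarrow> 'a set set \<Rightarrow> ('a::finite \<Rightarrow> real) \<Rightarrow> ('a \<Rightarrow> real) \<Rightarrow> real"
  where "lap_form r E x z = (\<Sum>u\<in>UNIV. \<Sum>v\<in>UNIV. x u * lap r E u v * z v)"

definition edge_form :: "('a \<Rightarrow> real) \<Rightarrow> ('a \<Rightarrow> real) \<Rightarrow> 'a set \<Rightarrow> real"
  where "edge_form x z e = (\<Sum>u\<in>e. \<Sum>v\<in>e. x u * z v * (if u = v then 1 else -1))"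

definition current :: "('a set \<Rightarrow> real) \<Rightarrow> 'a set set \<Rightarrow> ('a \<Rightarrow> real) \<Rightarrow> 'a \<Rightarrow> 'a \<Rightarrow> real"
  where "current r E x k l = (if {k, l} \<in> E then (x k - x l) / r {k, l} else 0)"

lemma edge_form_doubleton: "k \<noteq> l \<Longrightarrow> edge_form x z {k, l} = (x k - x l) * (z k - z l)"
  unfolding edge_form_def by (simp add: algebra_simps)

lemma current_antisym: "current r E x l k = - current r E x k l"
  unfolding current_def by (simp add: insert_commute divide_simps)

lemma flow_eq_current_sum: "flow r E x C = (\<Sum>k\<in>C. \<Sum>l\<in>-C. current r E x k l)"
  unfolding flow_def current_def ..

lemma double_sum_antisym_eq_0:
  assumes "\<And>k l. G l k = - G k l"
  shows "(\<Sum>k\<in>A. \<Sum>l\<in>A. G k l) = (0::real)"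
proof -
  have "(\<Sum>k\<in>A. \<Sum>l\<in>A. G k l) = (\<Sum>l\<in>A. \<Sum>k\<in>A. G k l)"
    by (rule sum.swap)
  also have "\<dots> = (\<Sum>l\<in>A. \<Sum>k\<in>A. - G l k)"
    by (intro sum.cong refl) (rule assms)
  also have "\<dots> = - (\<Sum>k\<in>A. \<Sum>l\<in>A. G k l)"
    by (simp add: sum_negf)
  finally show ?thesis by simp
qed

lemma lap_form_eq_edge_sum: "lap_form r E x z = (\<Sum>e\<in>E. edge_form x z e / r e)"
proof -
  let ?s = "\<lambda>e u v. if u \<in> e \<and> v \<in> e then x u * z v * (if u = v then 1 else -1) else 0"
  have restrict: "(\<Sum>u\<in>UNIV. \<Sum>v\<in>UNIV. ?s e u v) = edge_form x z e" for e
  proof -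
    have "(\<Sum>u\<in>UNIV. \<Sum>v\<in>UNIV. ?s e u v) = (\<Sum>u\<in>UNIV. if u \<in> e then
        \<Sum>v\<in>UNIV. if v \<in> e then x u * z v * (if u = v then 1 else -1) else 0 else 0)"
      by (intro sum.cong refl) auto
    then show ?thesis by (simp add: edge_form_def sum.If_cases)
  qed
  have "lap_form r E x z = (\<Sum>u\<in>UNIV. \<Sum>v\<in>UNIV. \<Sum>e\<in>E. ?s e u v / r e)"
    unfolding lap_form_def lap_def sum_distrib_left sum_distrib_right
    by (intro sum.cong refl) (simp add: field_simps)
  also have "\<dots> = (\<Sum>e\<in>E. (\<Sum>u\<in>UNIV. \<Sum>v\<in>UNIV. ?s e u v) / r e)"
    by (simp add: sum_divide_distrib sum.swap[of _ _ E])
  finally show ?thesis by (simp only: restrict)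
qed

lemma lap_form_add_scaled_left:
  "lap_form r E (\<lambda>v. x v + t * w v) z = lap_form r E x z + t * lap_form r E w z"
  unfolding lap_form_def by (simp add: algebra_simps sum.distrib sum_distrib_left)

lemma lap_form_add_scaled_right:
  "lap_form r E z (\<lambda>v. x v + t * w v) = lap_form r E z x + t * lap_form r E z w"
  unfolding lap_form_def by (simp add: algebra_simps sum.distrib sum_distrib_left)

lemma Bfun_eq_lap_form: "Bfun b r E x = (\<Sum>v\<in>UNIV. b v * x v) - lap_form r E x x / 2"
  unfolding Bfun_def lap_form_def by simp

lemma Bfun_zero: "Bfun b r E (\<lambda>_. 0) = 0"
  unfolding Bfun_def by simp

lemma sum_mult_indicator: "(\<Sum>v\<in>UNIV. b v * indicator C v) = bset b (C :: 'a::finite set)"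
  unfolding bset_def by (simp add: indicator_def sum.If_cases)

lemma doubleton_in_cut_edges_iff:
  "{k, l} \<in> E \<Longrightarrow> {k, l} \<in> cut_edges E C \<longleftrightarrow> (k \<in> C \<longleftrightarrow> l \<notin> C)"
  unfolding cut_edges_def by (auto simp: doubleton_eq_iff)

locale network =
  fixes E :: "'a::finite set set" and r :: "'a set \<Rightarrow> real"
  assumes edges_ok: "graph_edges_ok E"
    and resistance_pos: "\<forall>e\<in>E. r e > 0"
begin

lemma edge_doubleton:
  assumes "e \<in> E"
  obtains k l where "k \<noteq> l" "e = {k, l}"
  using assms edges_ok unfolding graph_edges_ok_def by (metis card_2_iff)

lemma lap_form_commute: "lap_form r E x z = lap_form r E z x"
  unfolding lap_form_eq_edge_sum
proof (rule sum.cong[OF refl])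
  fix e assume "e \<in> E"
  then obtain k l where "k \<noteq> l" "e = {k, l}" by (rule edge_doubleton)
  then show "edge_form x z e / r e = edge_form z x e / r e" by (simp add: edge_form_doubleton)
qed

lemma lap_form_self_nonneg: "0 \<le> lap_form r E x x"
  unfolding lap_form_eq_edge_sum
proof (rule sum_nonneg)
  fix e assume e: "e \<in> E"
  then obtain k l where "k \<noteq> l" "e = {k, l}" by (rule edge_doubleton)
  then show "0 \<le> edge_form x x e / r e"
    using e resistance_pos by (simp add: edge_form_doubleton less_imp_le)
qed

lemma lap_form_const_left: "lap_form r E (\<lambda>_. c) z = 0"
  unfolding lap_form_eq_edge_sum
proof (rule sum.neutral, rule ballI)
  fix e assume "e \<in> E"
  then obtain k l where "k \<noteq> l" "e = {k, l}" by (rule edge_doubleton)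
  then show "edge_form (\<lambda>_. c) z e / r e = 0" by (simp add: edge_form_doubleton)
qed

lemma Bfun_add_scaled:
  "Bfun b r E (\<lambda>v. x v + t * z v)
     = Bfun b r E x + t * ((\<Sum>v\<in>UNIV. b v * z v) - lap_form r E x z) - t\<^sup>2 / 2 * lap_form r E z z"
proof -
  have "lap_form r E (\<lambda>v. x v + t * z v) (\<lambda>v. x v + t * z v)
      = lap_form r E x x + 2 * t * lap_form r E x z + t\<^sup>2 * lap_form r E z z"
    using lap_form_commute[of z x]
    by (simp add: lap_form_add_scaled_left lap_form_add_scaled_right algebra_simps power2_eq_square)
  then show ?thesis
    unfolding Bfun_eq_lap_form by (simp add: algebra_simps sum.distrib sum_distrib_left)
qed

lemma sum_pairs_eq_twice_sum_edges:
  "(\<Sum>k\<in>UNIV. \<Sum>l\<in>UNIV. if {k, l} \<in> E then h {k, l} else 0) = 2 * (\<Sum>e\<in>E. h e :: real)"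
proof -
  have pairs: "(\<Sum>k\<in>UNIV. \<Sum>l\<in>UNIV. if {k, l} = e then h e else 0) = 2 * h e" if "e \<in> E" for e
  proof -
    obtain a c where ac: "a \<noteq> c" "e = {a, c}" using \<open>e \<in> E\<close> by (rule edge_doubleton)
    have "(\<Sum>l\<in>UNIV. if {k, l} = e then h e else 0) = (if k = a then h e else 0) + (if k = c then h e else 0)"
      for k using ac by (auto simp: doubleton_eq_iff)
    then show ?thesis by (simp add: sum.distrib)
  qed
  have "(\<Sum>k\<in>UNIV. \<Sum>l\<in>UNIV. if {k, l} \<in> E then h {k, l} else 0)
      = (\<Sum>k\<in>UNIV. \<Sum>l\<in>UNIV. \<Sum>e\<in>E. if {k, l} = e then h e else 0)"
    by (intro sum.cong refl) (simp add: sum.delta)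
  also have "\<dots> = (\<Sum>k\<in>UNIV. \<Sum>e\<in>E. \<Sum>l\<in>UNIV. if {k, l} = e then h e else 0)"
    by (intro sum.cong refl) (rule sum.swap)
  also have "\<dots> = (\<Sum>e\<in>E. \<Sum>k\<in>UNIV. \<Sum>l\<in>UNIV. if {k, l} = e then h e else 0)"
    by (rule sum.swap)
  also have "\<dots> = 2 * (\<Sum>e\<in>E. h e)"
    by (simp add: pairs sum_distrib_left)
  finally show ?thesis .
qed

lemma lap_form_eq_current_sum:
  "lap_form r E x z = (\<Sum>k\<in>UNIV. (\<Sum>l\<in>UNIV. current r E x k l) * z k)"
proof -
  let ?J = "current r E x"
  have edge: "(if {k, l} \<in> E then edge_form x z {k, l} / r {k, l} else 0) = ?J k l * z k + ?J l k * z l"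
    for k l
  proof (cases "{k, l} \<in> E")
    case True
    then have "k \<noteq> l" by (metis edge_doubleton doubleton_eq_iff)
    then show ?thesis
      using True by (simp add: edge_form_doubleton current_def insert_commute divide_inverse algebra_simps)
  qed (simp add: current_def insert_commute)
  have swap: "(\<Sum>k\<in>UNIV. \<Sum>l\<in>UNIV. ?J l k * z l) = (\<Sum>k\<in>UNIV. \<Sum>l\<in>UNIV. ?J k l * z k)"
    by (rule sum.swap)
  have "2 * lap_form r E x z = (\<Sum>k\<in>UNIV. \<Sum>l\<in>UNIV. ?J k l * z k + ?J l k * z l)"
    unfolding lap_form_eq_edge_sum sum_pairs_eq_twice_sum_edges[symmetric] edge ..
  also have "\<dots> = 2 * (\<Sum>k\<in>UNIV. \<Sum>l\<in>UNIV. ?J k l * z k)"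
    by (simp only: sum.distrib swap)
  finally show ?thesis by (simp add: sum_distrib_right)
qed

lemma lap_form_indicator_right: "lap_form r E x (indicator C) = flow r E x C"
proof -
  let ?J = "current r E x"
  have "lap_form r E x (indicator C) = (\<Sum>k\<in>C. \<Sum>l\<in>UNIV. ?J k l)"
    unfolding lap_form_eq_current_sum by (simp add: indicator_def sum.If_cases)
  also have "\<dots> = (\<Sum>k\<in>C. \<Sum>l\<in>C. ?J k l) + (\<Sum>k\<in>C. \<Sum>l\<in>-C. ?J k l)"
    by (simp add: sum.distrib[symmetric] sum.subset_diff[of C UNIV] Compl_eq_Diff_UNIV add.commute)
  also have "(\<Sum>k\<in>C. \<Sum>l\<in>C. ?J k l) = 0"
    by (rule double_sum_antisym_eq_0) (rule current_antisym)
  finally show ?thesis by (simp add: flow_eq_current_sum)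
qed

lemma lap_form_indicator_self: "lap_form r E (indicator C) (indicator C) = inverse (Rcut r E C)"
proof -
  have "lap_form r E (indicator C) (indicator C) = (\<Sum>e\<in>E. if e \<in> cut_edges E C then 1 / r e else 0)"
    unfolding lap_form_eq_edge_sum
  proof (rule sum.cong[OF refl])
    fix e assume e: "e \<in> E"
    then obtain k l where "k \<noteq> l" "e = {k, l}" by (rule edge_doubleton)
    then show "edge_form (indicator C) (indicator C) e / r e = (if e \<in> cut_edges E C then 1 / r e else 0)"
      using e doubleton_in_cut_edges_iff[of k l E C] by (auto simp: edge_form_doubleton indicator_def)
  qed
  also have "\<dots> = (\<Sum>e\<in>{e \<in> E. e \<in> cut_edges E C}. 1 / r e)"
    by (simp add: sum.inter_filter)
  also have "{e \<in> E. e \<in> cut_edges E C} = cut_edges E C"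
    unfolding cut_edges_def by auto
  finally show ?thesis by (simp add: Rcut_def)
qed

lemma Bfun_cut_update:
  "Bfun b r E (\<lambda>v. x v + (bset b C - flow r E x C) * Rcut r E C * indicator C v)
     = Bfun b r E x + (bset b C - flow r E x C)\<^sup>2 * Rcut r E C / 2"
proof -
  define D where "D = bset b C - flow r E x C"
  define R where "R = Rcut r E C"
  have "Bfun b r E (\<lambda>v. x v + D * R * indicator C v) = Bfun b r E x + D * R * D - (D * R)\<^sup>2 / 2 * inverse R"
    unfolding Bfun_add_scaled lap_form_indicator_self
    unfolding sum_mult_indicator lap_form_indicator_right D_def R_def by simp
  also have "\<dots> = Bfun b r E x + D\<^sup>2 * R / 2"
    \<comment> \<open>R = 0 exactly when the cut is empty, as inverse 0 = 0\<close>
    by (cases "R = 0") (simp_all add: power2_eq_square field_simps)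
  finally show ?thesis unfolding D_def R_def .
qed

end

section \<open>The maximiser of the energy\<close>

lemma concave_quadratic_nonpos_imp_zero:
  fixes c q :: real
  assumes "q \<ge> 0" and nonpos: "\<And>t. t * c - t\<^sup>2 / 2 * q \<le> 0"
  shows "c = 0"
proof (rule ccontr)
  assume "c \<noteq> 0"
  define t where "t = c / (q + 1)"
  have "c = t * (q + 1)" using \<open>q \<ge> 0\<close> by (simp add: t_def)
  then have "t * c - t\<^sup>2 / 2 * q = t\<^sup>2 * (q / 2 + 1)"
    by (simp add: power2_eq_square algebra_simps)
  also have "\<dots> > 0"
    using \<open>c \<noteq> 0\<close> \<open>c = t * (q + 1)\<close> \<open>q \<ge> 0\<close> by (intro mult_pos_pos) auto
  finally show False using nonpos[of t] by simp
qed

locale network_optimum = network +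
  fixes b :: "'a::finite \<Rightarrow> real" and xstar :: "'a \<Rightarrow> real"
  assumes optimal: "\<forall>x. Bfun b r E x \<le> Bfun b r E xstar"
begin

lemma Bfun_optimum_nonneg: "0 \<le> Bfun b r E xstar"
  using optimal Bfun_zero by metis

lemma lap_form_optimum: "lap_form r E xstar z = (\<Sum>v\<in>UNIV. b v * z v)"
proof -
  have "t * ((\<Sum>v\<in>UNIV. b v * z v) - lap_form r E xstar z) - t\<^sup>2 / 2 * lap_form r E z z \<le> 0" for t
    using optimal[rule_format, of "\<lambda>v. xstar v + t * z v"] by (simp add: Bfun_add_scaled)
  then have "(\<Sum>v\<in>UNIV. b v * z v) - lap_form r E xstar z = 0"
    by (rule concave_quadratic_nonpos_imp_zero[OF lap_form_self_nonneg])
  then show ?thesis by simp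
qed

lemma Bfun_gap:
  "Bfun b r E xstar - Bfun b r E x = lap_form r E (\<lambda>v. xstar v - x v) (\<lambda>v. xstar v - x v) / 2"
proof -
  have "x = (\<lambda>v. xstar v + (-1) * (xstar v - x v))" by simp
  then have "Bfun b r E x = Bfun b r E (\<lambda>v. xstar v + (-1) * (xstar v - x v))" by simp
  also have "\<dots> = Bfun b r E xstar - lap_form r E (\<lambda>v. xstar v - x v) (\<lambda>v. xstar v - x v) / 2"
    unfolding Bfun_add_scaled lap_form_optimum by simp
  finally show ?thesis by simp
qed

lemma cut_residual_eq_lap_form:
  "bset b C - flow r E x C = lap_form r E (indicator C) (\<lambda>v. xstar v - x v)"
proof -
  have "lap_form r E (indicator C) (\<lambda>v. xstar v + (-1) * x v)
      = lap_form r E (indicator C) xstar - lap_form r E (indicator C) x"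
    by (simp only: lap_form_add_scaled_right)
  then show ?thesis
    by (simp add: lap_form_commute[of "indicator C"] lap_form_optimum sum_mult_indicator
        lap_form_indicator_right[of x C])
qed

end

section \<open>Rooted spanning trees\<close>

locale rooted_tree =
  fixes E :: "'a::finite set set" and T :: "('a \<times> 'a) set" and rho :: 'a
  assumes spanning_tree: "rooted_spanning_tree E T rho"
begin

lemma tree_edge_in_graph: "(i, j) \<in> T \<Longrightarrow> {i, j} \<in> E"
  using spanning_tree unfolding rooted_spanning_tree_def by auto

lemma reaches_root: "(v, rho) \<in> T\<^sup>*"
  using spanning_tree unfolding rooted_spanning_tree_def by auto

lemma out_edge_unique: "(i, j) \<in> T \<Longrightarrow> (i, j') \<in> T \<Longrightarrow> j = j'"
  using spanning_tree unfolding rooted_spanning_tree_def by metis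

lemma root_rtrancl: "(rho, v) \<in> T\<^sup>* \<Longrightarrow> v = rho"
  using spanning_tree unfolding rooted_spanning_tree_def by (metis converse_rtranclE)

lemma trancl_through_out_edge: "(u, w) \<in> T\<^sup>+ \<Longrightarrow> (u, s) \<in> T \<Longrightarrow> (s, w) \<in> T\<^sup>*"
  by (metis out_edge_unique tranclD)

lemma tree_acyclic:
  assumes ij: "(i, j) \<in> T"
  shows "(j, i) \<notin> T\<^sup>*"
proof
  assume "(j, i) \<in> T\<^sup>*"
  with ij have cycle: "(i, i) \<in> T\<^sup>+" by auto
  have returns: "(w, i) \<in> T\<^sup>*" if "(i, w) \<in> T\<^sup>*" for w
    using that
  proof (induction rule: rtrancl_induct)
    case (step w w')
    have "(w, i) \<in> T\<^sup>+" using step.IH cycle by (rule rtrancl_trancl_trancl)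
    then show ?case using step.hyps(2) by (rule trancl_through_out_edge)
  qed simp
  have "i = rho" using returns[OF reaches_root] by (rule root_rtrancl)
  then show False
    using ij spanning_tree unfolding rooted_spanning_tree_def by blast
qed

lemma tree_comp_eq:
  assumes ij: "(i, j) \<in> T"
  shows "tree_comp T i j = {v. (v, i) \<in> T\<^sup>*}"
proof (intro set_eqI iffI; simp)
  let ?R = "(T - {(i, j)}) \<union> (T - {(i, j)})\<inverse>"
  fix v
  show "(v, i) \<in> T\<^sup>*" if "v \<in> tree_comp T i j"
  proof -
    have "(i, v) \<in> ?R\<^sup>*" using that unfolding tree_comp_def by simp
    then show ?thesis
    proof (induction rule: rtrancl_induct)
      case (step u w)
      show ?case
      proof (cases "(u, w) \<in> T - {(i, j)}")
        case True
        then have "u \<noteq> i" using ij out_edge_unique by blast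
        then have "(u, i) \<in> T\<^sup>+" using step.IH by (metis rtranclD)
        then show ?thesis using True by (blast intro: trancl_through_out_edge)
      next
        case False
        then show ?thesis using step by (blast intro: converse_rtrancl_into_rtrancl)
      qed
    qed simp
  qed
  show "v \<in> tree_comp T i j" if "(v, i) \<in> T\<^sup>*"
  proof -
    from that have "(i, v) \<in> ?R\<^sup>*"
    proof (induction rule: converse_rtrancl_induct)
      case (step v w)
      then have "(v, w) \<noteq> (i, j)" using tree_acyclic by blast
      then have "(w, v) \<in> ?R" using step by auto
      then show ?case by (rule rtrancl.rtrancl_into_rtrancl[OF step.IH])
    qed simp
    then show ?thesis unfolding tree_comp_def by simp
  qed
qed

lemma tree_comp_separates:
  assumes "(i, j) \<in> T"
  shows "i \<in> tree_comp T i j" and "j \<notin> tree_comp T i j"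
  using assms tree_acyclic by (auto simp: tree_comp_eq)

lemma telescope_to_root:
  "(\<Sum>p\<in>T. if (v, fst p) \<in> T\<^sup>* then y (fst p) - y (snd p) else 0) = y v - (y rho :: real)"
  using reaches_root[of v]
proof (induction rule: converse_rtrancl_induct)
  case base
  have "(rho, fst p) \<notin> T\<^sup>*" if "p \<in> T" for p
    using that root_rtrancl spanning_tree unfolding rooted_spanning_tree_def by (metis prod.collapse)
  then show ?case by (simp add: sum.neutral)
next
  case (step v w)
  have path: "(v, u) \<in> T\<^sup>* \<longleftrightarrow> u = v \<or> (w, u) \<in> T\<^sup>*" for u
    using step.hyps(1) trancl_through_out_edge
    by (metis converse_rtrancl_into_rtrancl rtranclD rtrancl.rtrancl_refl)
  have "(w, v) \<notin> T\<^sup>*" using step.hyps(1) by (rule tree_acyclic)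
  then have "(\<Sum>p\<in>T. if (v, fst p) \<in> T\<^sup>* then y (fst p) - y (snd p) else 0)
      = (\<Sum>p\<in>T. if fst p = v then y (fst p) - y (snd p) else 0)
        + (\<Sum>p\<in>T. if (w, fst p) \<in> T\<^sup>* then y (fst p) - y (snd p) else 0)"
    unfolding sum.distrib[symmetric] by (intro sum.cong refl) (auto simp: path)
  also have "{p \<in> T. fst p = v} = {(v, w)}"
    using step.hyps(1) out_edge_unique by auto
  then have "(\<Sum>p\<in>T. if fst p = v then y (fst p) - y (snd p) else 0) = y v - y w"
    by (simp add: sum.inter_filter[symmetric])
  finally show ?case using step.IH by simp
qed

end

definition sample_weight :: "('a::finite set \<Rightarrow> real) \<Rightarrow> 'a set set \<Rightarrow> ('a \<times> 'a) set \<Rightarrow> 'a \<times> 'a \<Rightarrow> real"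
  where "sample_weight r E T p = r {fst p, snd p} / Rcut r E (tree_comp T (fst p) (snd p))"

lemma tau_eq_sum_sample_weight: "tau r E T = (\<Sum>p\<in>T. sample_weight r E T p)"
  unfolding tau_def sample_weight_def by (simp add: case_prod_beta)

locale tree_network = network E r + rooted_tree E T rho
  for E :: "'a::finite set set" and r T rho
begin

lemma lap_form_tree_decomposition:
  "lap_form r E y y = (\<Sum>p\<in>T. (y (fst p) - y (snd p)) * lap_form r E (indicator (tree_comp T (fst p) (snd p))) y)"
proof -
  define d where "d u = (\<Sum>v\<in>UNIV. lap r E u v * y v)" for u
  have lap_form_d: "lap_form r E z y = (\<Sum>u\<in>UNIV. z u * d u)" for z
    unfolding lap_form_def d_def by (simp add: sum_distrib_left mult.assoc)
  have sum_d: "(\<Sum>u\<in>UNIV. d u) = 0"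
    using lap_form_d[of "\<lambda>_. 1"] lap_form_const_left[of 1 y] by simp
  have comp: "lap_form r E (indicator (tree_comp T (fst p) (snd p))) y = (\<Sum>u\<in>UNIV. if (u, fst p) \<in> T\<^sup>* then d u else 0)"
    if "p \<in> T" for p
    using that unfolding lap_form_d by (intro sum.cong refl) (simp add: tree_comp_eq indicator_def)
  have "(\<Sum>p\<in>T. (y (fst p) - y (snd p)) * lap_form r E (indicator (tree_comp T (fst p) (snd p))) y)
      = (\<Sum>p\<in>T. \<Sum>u\<in>UNIV. d u * (if (u, fst p) \<in> T\<^sup>* then y (fst p) - y (snd p) else 0))"
    by (auto simp: comp sum_distrib_left mult.commute intro!: sum.cong)
  also have "\<dots> = (\<Sum>u\<in>UNIV. \<Sum>p\<in>T. d u * (if (u, fst p) \<in> T\<^sup>* then y (fst p) - y (snd p) else 0))"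
    by (rule sum.swap)
  also have "\<dots> = (\<Sum>u\<in>UNIV. d u * (y u - y rho))"
    by (simp add: telescope_to_root flip: sum_distrib_left)
  also have "\<dots> = (\<Sum>u\<in>UNIV. y u * d u) - y rho * (\<Sum>u\<in>UNIV. d u)"
    by (simp add: algebra_simps sum_subtractf sum_distrib_left)
  finally show ?thesis by (simp add: sum_d lap_form_d)
qed

lemma tree_energy_le_lap_form:
  "(\<Sum>p\<in>T. (y (fst p) - y (snd p))\<^sup>2 / r {fst p, snd p}) \<le> lap_form r E y y"
proof -
  let ?edge = "\<lambda>p. {fst p, snd p}"
  let ?energy = "\<lambda>e. edge_form y y e / r e"
  have distinct: "fst p \<noteq> snd p" if "p \<in> T" for p
    using that tree_edge_in_graph edge_doubleton by (metis doubleton_eq_iff prod.collapse)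
  have inj: "inj_on ?edge T"
  proof (rule inj_onI)
    fix p q assume p: "p \<in> T" and q: "q \<in> T" and eq: "?edge p = ?edge q"
    show "p = q"
    proof (cases "fst p = fst q")
      case True then show ?thesis using p q out_edge_unique by (metis prod.collapse)
    next
      case False
      then have "fst p = snd q" "snd p = fst q" using eq by (auto simp: doubleton_eq_iff)
      then show ?thesis using p q tree_acyclic by (metis prod.collapse r_into_rtrancl)
    qed
  qed
  have "(\<Sum>p\<in>T. (y (fst p) - y (snd p))\<^sup>2 / r {fst p, snd p}) = (\<Sum>p\<in>T. ?energy (?edge p))"
    by (intro sum.cong refl) (simp add: distinct edge_form_doubleton power2_eq_square)
  also have "\<dots> = (\<Sum>e\<in>?edge ` T. ?energy e)"
    using sum.reindex[OF inj, of ?energy] by (simp add: comp_def)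
  also have "\<dots> \<le> (\<Sum>e\<in>E. ?energy e)"
  proof (rule sum_mono2)
    show "?edge ` T \<subseteq> E" using tree_edge_in_graph by auto
    show "0 \<le> ?energy e" if "e \<in> E - ?edge ` T" for e
    proof -
      from that have "e \<in> E" by simp
      then obtain k l where "k \<noteq> l" "e = {k, l}" by (rule edge_doubleton)
      then show ?thesis using \<open>e \<in> E\<close> resistance_pos by (simp add: edge_form_doubleton less_imp_le)
    qed
  qed simp
  finally show ?thesis by (simp add: lap_form_eq_edge_sum)
qed

lemma lap_form_le_tree_cut_sum:
  "lap_form r E y y \<le> (\<Sum>p\<in>T. r {fst p, snd p} * (lap_form r E (indicator (tree_comp T (fst p) (snd p))) y)\<^sup>2)"
proof -
  let ?a = "\<lambda>p. y (fst p) - y (snd p)"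
  let ?g = "\<lambda>p. lap_form r E (indicator (tree_comp T (fst p) (snd p))) y"
  let ?r = "\<lambda>p. r {fst p, snd p}"
  have am_gm: "?a p * ?g p \<le> (?a p)\<^sup>2 / ?r p / 2 + ?r p * (?g p)\<^sup>2 / 2" if "p \<in> T" for p
  proof -
    have "?r p > 0" using that tree_edge_in_graph resistance_pos by (metis prod.collapse)
    then have "0 \<le> (?a p - ?r p * ?g p)\<^sup>2 / ?r p / 2" by simp
    also have "\<dots> = (?a p)\<^sup>2 / ?r p / 2 + ?r p * (?g p)\<^sup>2 / 2 - ?a p * ?g p"
      using \<open>?r p > 0\<close> by (simp add: field_simps power2_eq_square)
    finally show ?thesis by simp
  qed
  have "lap_form r E y y = (\<Sum>p\<in>T. ?a p * ?g p)"
    by (rule lap_form_tree_decomposition)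
  also have "\<dots> \<le> (\<Sum>p\<in>T. (?a p)\<^sup>2 / ?r p) / 2 + (\<Sum>p\<in>T. ?r p * (?g p)\<^sup>2) / 2"
    using sum_mono[OF am_gm] by (simp add: sum.distrib sum_divide_distrib)
  also have "\<dots> \<le> lap_form r E y y / 2 + (\<Sum>p\<in>T. ?r p * (?g p)\<^sup>2) / 2"
    using tree_energy_le_lap_form[of y] by simp
  finally show ?thesis by simp
qed

lemma tree_edge_sampling:
  assumes "p \<in> T"
  shows "Rcut r E (tree_comp T (fst p) (snd p)) > 0" and "sample_weight r E T p \<ge> 1"
proof -
  obtain i j where p: "p = (i, j)" by fastforce
  let ?C = "tree_comp T i j"
  let ?S = "\<Sum>e\<in>cut_edges E ?C. 1 / r e"
  have ij: "(i, j) \<in> T" using assms p by simp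
  have r_ij: "r {i, j} > 0" using resistance_pos tree_edge_in_graph[OF ij] by blast
  have "{i, j} \<in> cut_edges E ?C"
    using tree_edge_in_graph[OF ij] tree_comp_separates[OF ij] unfolding cut_edges_def by blast
  then have S: "1 / r {i, j} \<le> ?S"
    using resistance_pos by (intro member_le_sum) (auto simp: cut_edges_def less_imp_le)
  moreover have "0 < 1 / r {i, j}" using r_ij by simp
  ultimately have "0 < ?S" by linarith
  then show "Rcut r E (tree_comp T (fst p) (snd p)) > 0" by (simp add: p Rcut_def)
  have "1 = r {i, j} * (1 / r {i, j})" using r_ij by simp
  also have "\<dots> \<le> r {i, j} * ?S" using S r_ij by (intro mult_left_mono) simp_all
  also have "\<dots> = sample_weight r E T p" by (simp add: p sample_weight_def Rcut_def divide_inverse)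
  finally show "sample_weight r E T p \<ge> 1" .
qed

lemma tau_ge_1: "T \<noteq> {} \<Longrightarrow> tau r E T \<ge> 1"
proof -
  assume "T \<noteq> {}"
  then obtain p where p: "p \<in> T" by blast
  have "1 \<le> sample_weight r E T p" using p by (rule tree_edge_sampling)
  also have "\<dots> \<le> (\<Sum>p\<in>T. sample_weight r E T p)"
    using tree_edge_sampling(2) by (intro member_le_sum[OF p]) (auto intro: order_trans[OF zero_le_one])
  finally show ?thesis by (simp add: tau_eq_sum_sample_weight)
qed

lemma pmf_edge_pmf:
  assumes "tau r E T > 0"
  shows "pmf (edge_pmf r E T) p = (if p \<in> T then sample_weight r E T p / tau r E T else 0)"
proof -
  define f where "f p = (if p \<in> T then sample_weight r E T p / tau r E T else 0)" for p
  have f_nonneg: "0 \<le> f p" for p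
    using assms tree_edge_sampling(2)[of p] by (auto simp: f_def)
  have "(\<Sum>p\<in>UNIV. f p) = 1"
    using assms by (simp add: f_def sum.If_cases sum_divide_distrib[symmetric] tau_eq_sum_sample_weight)
  then have "(\<integral>\<^sup>+p. ennreal (f p) \<partial>count_space UNIV) = 1"
    using f_nonneg by (simp add: nn_integral_count_space_finite)
  then have "pmf (embed_pmf f) p = f p"
    using f_nonneg by (intro pmf_embed_pmf) auto
  moreover have "edge_pmf r E T = embed_pmf f"
    unfolding edge_pmf_def
    by (intro arg_cong[where f = embed_pmf] ext) (simp add: f_def sample_weight_def split: prod.splits)
  ultimately show ?thesis by (simp add: f_def)
qed

lemma expectation_edge_pmf:
  assumes "tau r E T > 0"
  shows "measure_pmf.expectation (edge_pmf r E T) h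
           = (\<Sum>p\<in>T. sample_weight r E T p / tau r E T * h p)"
  by (subst integral_measure_pmf[of T]) (auto simp: pmf_edge_pmf[OF assms] set_pmf_eq split: if_splits)

end

section \<open>Convergence of Dual KOSZ\<close>

lemma finite_set_pmf_kosz_dist: "finite (set_pmf (kosz_dist b r E T K))"
  by (induction K) (auto simp: set_bind_pmf)

lemma expectation_kosz_dist_Suc:
  "measure_pmf.expectation (kosz_dist b r E T (Suc K)) f
     = measure_pmf.expectation (kosz_dist b r E T K)
         (\<lambda>x. measure_pmf.expectation (edge_pmf r E T) (\<lambda>p. f (kosz_update b r E T x p)) :: real)"
proof -
  let ?M = "kosz_dist b r E T K"
  have "measure_pmf.expectation (kosz_dist b r E T (Suc K)) f
      = (\<Sum>x\<in>set_pmf ?M. pmf ?M x *\<^sub>R measure_pmf.expectation (edge_pmf r E T) (\<lambda>p. f (kosz_update b r E T x p)))"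
    unfolding kosz_dist.simps
    by (subst pmf_expectation_bind[OF finite_set_pmf_kosz_dist]) simp_all
  also have "\<dots> = measure_pmf.expectation ?M
      (\<lambda>x. measure_pmf.expectation (edge_pmf r E T) (\<lambda>p. f (kosz_update b r E T x p)))"
    by (rule integral_measure_pmf[OF finite_set_pmf_kosz_dist, symmetric])
  finally show ?thesis .
qed

lemma power_one_minus_inverse_le:
  fixes tau \<epsilon> :: real
  assumes "tau \<ge> 1" and "\<epsilon> > 0"
  shows "(1 - 1 / tau) ^ nat \<lceil>tau * ln (1 / \<epsilon>)\<rceil> \<le> \<epsilon>"
proof -
  let ?K = "nat \<lceil>tau * ln (1 / \<epsilon>)\<rceil>"
  have "(1 - 1 / tau) ^ ?K \<le> exp (- 1 / tau) ^ ?K"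
    using assms(1) exp_ge_add_one_self[of "- 1 / tau"] by (intro power_mono) (simp_all add: field_simps)
  also have "\<dots> = exp (- (?K / tau))"
    by (simp flip: exp_of_nat_mult)
  also have "\<dots> \<le> exp (- ln (1 / \<epsilon>))"
    using assms(1) by (simp add: field_simps) linarith
  also have "\<dots> = \<epsilon>"
    using assms(2) by (simp add: ln_div)
  finally show ?thesis .
qed

locale dual_kosz = tree_network E r T rho + network_optimum E r b xstar
  for E :: "'a::finite set set" and r T rho b xstar
begin

lemma expected_gain:
  assumes "tau r E T > 0"
  shows "Bfun b r E x + (Bfun b r E xstar - Bfun b r E x) / tau r E T
           \<le> measure_pmf.expectation (edge_pmf r E T) (\<lambda>p. Bfun b r E (kosz_update b r E T x p))"
proof -
  let ?y = "\<lambda>v. xstar v - x v"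
  let ?C = "\<lambda>p. tree_comp T (fst p) (snd p)"
  let ?D = "\<lambda>p. lap_form r E (indicator (?C p)) ?y"
  let ?tau = "tau r E T"
  have update: "Bfun b r E (kosz_update b r E T x p) = Bfun b r E x + (?D p)\<^sup>2 * Rcut r E (?C p) / 2" for p
    unfolding kosz_update_def Let_def Bfun_cut_update unfolding cut_residual_eq_lap_form ..
  have weighted_gain: "sample_weight r E T p / ?tau * (Bfun b r E x + (?D p)\<^sup>2 * Rcut r E (?C p) / 2)
      = sample_weight r E T p / ?tau * Bfun b r E x + r {fst p, snd p} * (?D p)\<^sup>2 / (2 * ?tau)"
    if "p \<in> T" for p
    using tree_edge_sampling(1)[OF that] assms by (simp add: sample_weight_def field_simps)
  have average: "(\<Sum>p\<in>T. sample_weight r E T p / ?tau * Bfun b r E x) = Bfun b r E x"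
    using assms by (simp add: sum_distrib_right[symmetric] sum_divide_distrib[symmetric]
        tau_eq_sum_sample_weight[symmetric])
  have "measure_pmf.expectation (edge_pmf r E T) (\<lambda>p. Bfun b r E (kosz_update b r E T x p))
      = (\<Sum>p\<in>T. sample_weight r E T p / ?tau * (Bfun b r E x + (?D p)\<^sup>2 * Rcut r E (?C p) / 2))"
    unfolding expectation_edge_pmf[OF assms] update ..
  also have "\<dots> = (\<Sum>p\<in>T. sample_weight r E T p / ?tau * Bfun b r E x
                          + r {fst p, snd p} * (?D p)\<^sup>2 / (2 * ?tau))"
    by (intro sum.cong refl weighted_gain)
  also have "\<dots> = Bfun b r E x + (\<Sum>p\<in>T. r {fst p, snd p} * (?D p)\<^sup>2) / (2 * ?tau)"
    by (simp only: sum.distrib sum_divide_distrib average)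
  finally have expectation: "measure_pmf.expectation (edge_pmf r E T) (\<lambda>p. Bfun b r E (kosz_update b r E T x p))
      = Bfun b r E x + (\<Sum>p\<in>T. r {fst p, snd p} * (?D p)\<^sup>2) / (2 * ?tau)" .
  have "(Bfun b r E xstar - Bfun b r E x) / ?tau = lap_form r E ?y ?y / (2 * ?tau)"
    by (simp add: Bfun_gap)
  also have "\<dots> \<le> (\<Sum>p\<in>T. r {fst p, snd p} * (?D p)\<^sup>2) / (2 * ?tau)"
    using assms by (intro divide_right_mono lap_form_le_tree_cut_sum) simp
  finally show ?thesis by (simp add: expectation)
qed

lemma expected_gap_step:
  assumes "tau r E T > 0"
  shows "Bfun b r E xstar - measure_pmf.expectation (kosz_dist b r E T (Suc K)) (Bfun b r E)
           \<le> (1 - 1 / tau r E T) * (Bfun b r E xstar - measure_pmf.expectation (kosz_dist b r E T K) (Bfun b r E))"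
proof -
  let ?M = "kosz_dist b r E T K"
  let ?tau = "tau r E T"
  have integrable: "integrable ?M f" for f :: "_ \<Rightarrow> real"
    by (rule integrable_measure_pmf_finite[OF finite_set_pmf_kosz_dist])
  have "measure_pmf.expectation ?M (\<lambda>x. (1 - 1 / ?tau) * Bfun b r E x + Bfun b r E xstar / ?tau)
      = measure_pmf.expectation ?M (\<lambda>x. Bfun b r E x + (Bfun b r E xstar - Bfun b r E x) / ?tau)"
    by (intro Bochner_Integration.integral_cong refl) (use assms in \<open>simp add: field_simps\<close>)
  also have "\<dots> \<le> measure_pmf.expectation (kosz_dist b r E T (Suc K)) (Bfun b r E)"
    unfolding expectation_kosz_dist_Suc by (intro integral_mono integrable expected_gain assms)
  finally show ?thesis
    using integrable by (simp add: algebra_simps)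
qed

lemma expected_gap_bound:
  assumes "T \<noteq> {}"
  shows "Bfun b r E xstar - measure_pmf.expectation (kosz_dist b r E T K) (Bfun b r E)
           \<le> (1 - 1 / tau r E T) ^ K * Bfun b r E xstar"
proof (induction K)
  case 0
  show ?case by (simp add: Bfun_zero)
next
  case (Suc K)
  have tau: "tau r E T \<ge> 1" using assms by (rule tau_ge_1)
  then have "Bfun b r E xstar - measure_pmf.expectation (kosz_dist b r E T (Suc K)) (Bfun b r E)
      \<le> (1 - 1 / tau r E T) * (Bfun b r E xstar - measure_pmf.expectation (kosz_dist b r E T K) (Bfun b r E))"
    by (intro expected_gap_step) simp
  also have "\<dots> \<le> (1 - 1 / tau r E T) * ((1 - 1 / tau r E T) ^ K * Bfun b r E xstar)"
    using Suc.IH tau by (intro mult_left_mono) (simp_all add: field_simps)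
  finally show ?case by simp
qed

lemma Bfun_optimum_eq_0_if_no_tree_edges:
  assumes "T = {}"
  shows "Bfun b r E xstar = 0"
proof -
  have "Bfun b r E xstar = lap_form r E xstar xstar / 2"
    using Bfun_gap[of "\<lambda>_. 0"] by (simp add: Bfun_zero)
  also have "\<dots> \<le> 0"
    using lap_form_le_tree_cut_sum[of xstar] assms by simp
  finally show ?thesis using Bfun_optimum_nonneg by simp
qed

end

theorem mainTheorem13:
  fixes E :: "'a::finite set set" and r :: "'a set \<Rightarrow> real" and b :: "'a \<Rightarrow> real"
    and xstar :: "'a \<Rightarrow> real" and T :: "('a \<times> 'a) set" and rho :: 'a and \<epsilon> :: real
  assumes "graph_edges_ok E"
    and "\<forall>e\<in>E. r e > 0"
    and "graph_connected E"
    and "(\<Sum>v\<in>UNIV. b v) = 0"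
    and "\<forall>x. Bfun b r E x \<le> Bfun b r E xstar"
    and "rooted_spanning_tree E T rho"
    and "\<epsilon> > 0"
  shows "Bfun b r E xstar
           - measure_pmf.expectation (kosz_dist b r E T (nat \<lceil>tau r E T * ln (1 / \<epsilon>)\<rceil>)) (Bfun b r E)
         \<le> \<epsilon> * Bfun b r E xstar"
proof -
  interpret dual_kosz E r T rho b xstar
    using assms by unfold_locales auto
  show ?thesis
  proof (cases "T = {}")
    case True
    then show ?thesis by (simp add: Bfun_optimum_eq_0_if_no_tree_edges tau_def Bfun_zero)
  next
    case False
    let ?K = "nat \<lceil>tau r E T * ln (1 / \<epsilon>)\<rceil>"
    have "Bfun b r E xstar - measure_pmf.expectation (kosz_dist b r E T ?K) (Bfun b r E)
        \<le> (1 - 1 / tau r E T) ^ ?K * Bfun b r E xstar"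
      using False by (rule expected_gap_bound)
    also have "\<dots> \<le> \<epsilon> * Bfun b r E xstar"
      using power_one_minus_inverse_le[OF tau_ge_1[OF False] \<open>\<epsilon> > 0\<close>] Bfun_optimum_nonneg
      by (rule mult_right_mono)
    finally show ?thesis .
  qed
qed

end
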